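(* Let $f:\Gamma\to\Gamma$ be an irreducible, expanding graph map with stacks $\mathcal{K}_1,\dots,\mathcal{K}_p$, where $\mathcal{K}_i$ has $n_i$ edges, and let $n=|\mathcal{E}\Gamma|$. Then the stack graph $\mathcal{SG}(f)$ is strongly connected, and for every $i$ the set of all vertices of $\mathcal{SG}(f)$ is contained in the directed ball $B_{n-n_i}(\mathcal{K}_i)$.
   Context: A graph $\Gamma$ is a finite 1-dimensional CW complex with a chosen orientation on each edge; $\mathcal{E}\Gamma$ is its set of edges, $\bar e$ is the reverse of $e$, $\iota,\tau$ the endpoints. An edge path is a nonempty concatenation $u=e_1\cdots e_k$ of oriented edges with $\tau(e_i)=\iota(e_{i+1})$; $|u|=k$ (no cancellation); $u$ traverses $e$ if $e$ or $\bar e$ occurs in it. A graph map $f:\Gamma\to\Gamma$ assigns to vertices vertices and to each oriented edge $e$ an edge path $f(e)$ with $\iota(f(e))=f(\iota(e))$, $f(\bar e)=\overline{f(e)}$; powers are compositions, applied to paths by concatenation without tightening. $T(f)$ has $(i,j)$ entry the number of times $f(e_i)$ traverses $e_j$; $f$ is irreducible if $T(f)$ is irreducible and every vertex has valence $\ge3$; expanding if $|f^n(e)|\to\infty$ for every edge. Stacks: $e$ is mixing if $|f(e)|>1$; surplus if non-mixing and $f(e)\in\{f(u),\overline{f(u)}\}$ for some edge $u\notin\{e,\bar e\}$. Stacks are the classes of the equivalence relation on $\mathcal{E}\Gamma$ (unoriented edges) generated by $e\sim f(e)$ for $e$ non-mixing and non-surplus. Each stack has the form $\mathcal{K}=\{e,f(e),\dots,f^s(e)\}$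 with only $f^s(e)$ mixing or surplus; $f^s(e)$ is the final edge of $\mathcal{K}$. Let $\alpha_i$ be the final edge of $\mathcal{K}_i$. The stack graph $\mathcal{SG}(f)$ is the directed graph with vertex set $\{\mathcal{K}_1,\dots,\mathcal{K}_p\}$ and a directed edge $[\mathcal{K}_i,\mathcal{K}_j]$ whenever $f(\alpha_i)$ contains an edge of $\mathcal{K}_j$; its length is $s([\mathcal{K}_i,\mathcal{K}_j])=\min\{s\ge1:f^s(\alpha_i)\text{ traverses }\alpha_j\}$. For a directed path $P=E_1\cdots E_k$ (edges traversed only in their positive direction), $s(P)=\sum s(E_i)$. The directed ball of size $d$ at $\mathcal{K}_i$ is $B_d(\mathcal{K}_i)=\{\mathcal{K}_j:\text{there is a directed path }P\text{ from }\mathcal{K}_i\text{ to }\mathcal{K}_j\text{ with }s(P)\le d\}$ (the empty path, of length $0$, is allowed, so $\mathcal{K}_i\in B_d(\mathcal{K}_i)$). Strongly connected means there is a directed path between any ordered pair of vertices. *)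

theory Defs
  imports Main
begin

(* An oriented edge is a pair (e, b) with
   b = True the chosen orientation of e and b = False its reverse \<bar>e. *)

type_synonym 'e oedge = "'e \<times> bool"

definition ostart :: "('e \<Rightarrow> 'v) \<Rightarrow> ('e \<Rightarrow> 'v) \<Rightarrow> 'e oedge \<Rightarrow> 'v" where
  "ostart src tgt x = (if snd x then src (fst x) else tgt (fst x))"

definition oend :: "('e \<Rightarrow> 'v) \<Rightarrow> ('e \<Rightarrow> 'v) \<Rightarrow> 'e oedge \<Rightarrow> 'v" where
  "oend src tgt x = (if snd x then tgt (fst x) else src (fst x))"

definition obar :: "'e oedge \<Rightarrow> 'e oedge" where
  "obar x = (fst x, \<not> snd x)"

definition prev :: "'e oedge list \<Rightarrow> 'e oedge list" where
  "prev u = rev (map obar u)"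

definition is_graph :: "'v set \<Rightarrow> 'e set \<Rightarrow> ('e \<Rightarrow> 'v) \<Rightarrow> ('e \<Rightarrow> 'v) \<Rightarrow> bool" where
  "is_graph V E src tgt \<longleftrightarrow> finite V \<and> finite E \<and> (\<forall>e\<in>E. src e \<in> V \<and> tgt e \<in> V)"

(* nonempty concatenation of oriented edges of the graph, no cancellation required *)
definition is_edge_path :: "'e set \<Rightarrow> ('e \<Rightarrow> 'v) \<Rightarrow> ('e \<Rightarrow> 'v) \<Rightarrow> 'e oedge list \<Rightarrow> bool" where
  "is_edge_path E src tgt u \<longleftrightarrow> u \<noteq> [] \<and> fst ` set u \<subseteq> E \<and>
     (\<forall>i. Suc i < length u \<longrightarrow> oend src tgt (u ! i) = ostart src tgt (u ! Suc i))"

(* A graph map is given by fv on vertices and fe on positively oriented edges;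
   on reversed edges it is defined by f(\<bar>e) = reverse of f(e) (see omap). *)
definition graph_map :: "'v set \<Rightarrow> 'e set \<Rightarrow> ('e \<Rightarrow> 'v) \<Rightarrow> ('e \<Rightarrow> 'v) \<Rightarrow>
    ('v \<Rightarrow> 'v) \<Rightarrow> ('e \<Rightarrow> 'e oedge list) \<Rightarrow> bool" where
  "graph_map V E src tgt fv fe \<longleftrightarrow> fv ` V \<subseteq> V \<and>
     (\<forall>e\<in>E. is_edge_path E src tgt (fe e) \<and>
        ostart src tgt (hd (fe e)) = fv (src e) \<and> oend src tgt (last (fe e)) = fv (tgt e))"

definition omap :: "('e \<Rightarrow> 'e oedge list) \<Rightarrow> 'e oedge \<Rightarrow> 'e oedge list" where
  "omap fe x = (if snd x then fe (fst x) else prev (fe (fst x)))"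

(* image of a path: concatenation, no tightening *)
definition pmap :: "('e \<Rightarrow> 'e oedge list) \<Rightarrow> 'e oedge list \<Rightarrow> 'e oedge list" where
  "pmap fe u = concat (map (omap fe) u)"

definition fpow :: "('e \<Rightarrow> 'e oedge list) \<Rightarrow> nat \<Rightarrow> 'e \<Rightarrow> 'e oedge list" where
  "fpow fe n e = (pmap fe ^^ n) [(e, True)]"

definition traverses :: "'e oedge list \<Rightarrow> 'e \<Rightarrow> bool" where
  "traverses u e \<longleftrightarrow> e \<in> fst ` set u"

definition trans_mat :: "('e \<Rightarrow> 'e oedge list) \<Rightarrow> 'e \<Rightarrow> 'e \<Rightarrow> nat" where
  "trans_mat fe i j = length (filter (\<lambda>x. fst x = j) (fe i))"

fun mat_pow :: "'e set \<Rightarrow> ('e \<Rightarrow> 'e \<Rightarrow> nat) \<Rightarrow> nat \<Rightarrow> 'e \<Rightarrow> 'e \<Rightarrow> nat" where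
  "mat_pow E T 0 = (\<lambda>i j. if i = j then 1 else 0)"
| "mat_pow E T (Suc k) = (\<lambda>i j. \<Sum>l\<in>E. mat_pow E T k i l * T l j)"

definition irreducible_mat :: "'e set \<Rightarrow> ('e \<Rightarrow> 'e \<Rightarrow> nat) \<Rightarrow> bool" where
  "irreducible_mat E T \<longleftrightarrow> (\<forall>i\<in>E. \<forall>j\<in>E. \<exists>k\<ge>1. mat_pow E T k i j > 0)"

(* valence: number of oriented edges starting at v (loops count twice) *)
definition valence :: "'e set \<Rightarrow> ('e \<Rightarrow> 'v) \<Rightarrow> ('e \<Rightarrow> 'v) \<Rightarrow> 'v \<Rightarrow> nat" where
  "valence E src tgt v = card {x. fst x \<in> E \<and> ostart src tgt x = v}"

definition irreducible_map :: "'v set \<Rightarrow> 'e set \<Rightarrow> ('e \<Rightarrow> 'v) \<Rightarrow> ('e \<Rightarrow> 'v) \<Rightarrow>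
    ('e \<Rightarrow> 'e oedge list) \<Rightarrow> bool" where
  "irreducible_map V E src tgt fe \<longleftrightarrow> irreducible_mat E (trans_mat fe) \<and>
     (\<forall>v\<in>V. valence E src tgt v \<ge> 3)"

definition expanding :: "'e set \<Rightarrow> ('e \<Rightarrow> 'e oedge list) \<Rightarrow> bool" where
  "expanding E fe \<longleftrightarrow> (\<forall>e\<in>E. filterlim (\<lambda>n. length (fpow fe n e)) at_top sequentially)"

definition mixing :: "('e \<Rightarrow> 'e oedge list) \<Rightarrow> 'e \<Rightarrow> bool" where
  "mixing fe e \<longleftrightarrow> length (fe e) > 1"

definition surplus :: "'e set \<Rightarrow> ('e \<Rightarrow> 'e oedge list) \<Rightarrow> 'e \<Rightarrow> bool" where
  "surplus E fe e \<longleftrightarrow> \<not> mixing fe e \<and>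
     (\<exists>u\<in>E. u \<noteq> e \<and> (fe e = fe u \<or> fe e = prev (fe u)))"

(* generating pairs e ~ f(e) (f(e) is then a single oriented edge; take its underlying edge) *)
definition stack_step :: "'e set \<Rightarrow> ('e \<Rightarrow> 'e oedge list) \<Rightarrow> ('e \<times> 'e) set" where
  "stack_step E fe = {(e, fst (hd (fe e))) | e. e \<in> E \<and> \<not> mixing fe e \<and> \<not> surplus E fe e}"

definition stack_rel :: "'e set \<Rightarrow> ('e \<Rightarrow> 'e oedge list) \<Rightarrow> ('e \<times> 'e) set" where
  "stack_rel E fe = (stack_step E fe \<union> (stack_step E fe)\<inverse>)\<^sup>*"

definition stacks :: "'e set \<Rightarrow> ('e \<Rightarrow> 'e oedge list) \<Rightarrow> 'e set set" where
  "stacks E fe = E // stack_rel E fe"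

definition final_edge :: "'e set \<Rightarrow> ('e \<Rightarrow> 'e oedge list) \<Rightarrow> 'e set \<Rightarrow> 'e" where
  "final_edge E fe K = (THE a. a \<in> K \<and> (mixing fe a \<or> surplus E fe a))"

definition sg_edge :: "'e set \<Rightarrow> ('e \<Rightarrow> 'e oedge list) \<Rightarrow> 'e set \<Rightarrow> 'e set \<Rightarrow> bool" where
  "sg_edge E fe K K' \<longleftrightarrow> K \<in> stacks E fe \<and> K' \<in> stacks E fe \<and>
     (\<exists>x\<in>set (fe (final_edge E fe K)). fst x \<in> K')"

definition sg_len :: "'e set \<Rightarrow> ('e \<Rightarrow> 'e oedge list) \<Rightarrow> 'e set \<Rightarrow> 'e set \<Rightarrow> nat" where
  "sg_len E fe K K' =
     (LEAST s. s \<ge> 1 \<and> traverses (fpow fe s (final_edge E fe K)) (final_edge E fe K'))"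

(* directed path given by its list of visited vertices K_0, ..., K_k (k = 0: empty path) *)
definition sg_path :: "'e set \<Rightarrow> ('e \<Rightarrow> 'e oedge list) \<Rightarrow> 'e set list \<Rightarrow> bool" where
  "sg_path E fe ps \<longleftrightarrow> ps \<noteq> [] \<and> set ps \<subseteq> stacks E fe \<and>
     (\<forall>i. Suc i < length ps \<longrightarrow> sg_edge E fe (ps ! i) (ps ! Suc i))"

definition sg_path_len :: "'e set \<Rightarrow> ('e \<Rightarrow> 'e oedge list) \<Rightarrow> 'e set list \<Rightarrow> nat" where
  "sg_path_len E fe ps = sum_list (map (\<lambda>(K, K'). sg_len E fe K K') (zip ps (tl ps)))"

definition dball :: "'e set \<Rightarrow> ('e \<Rightarrow> 'e oedge list) \<Rightarrow> nat \<Rightarrow> 'e set \<Rightarrow> 'e set set" where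
  "dball E fe d K = {K'. \<exists>ps. sg_path E fe ps \<and> hd ps = K \<and> last ps = K' \<and> sg_path_len E fe ps \<le> d}"

definition sg_strongly_connected :: "'e set \<Rightarrow> ('e \<Rightarrow> 'e oedge list) \<Rightarrow> bool" where
  "sg_strongly_connected E fe \<longleftrightarrow>
     (\<forall>K\<in>stacks E fe. \<forall>K'\<in>stacks E fe. \<exists>ps. sg_path E fe ps \<and> hd ps = K \<and> last ps = K')"

end

theory Submission
  imports Defs
begin

(*
  Call an edge nonfinal if it is neither mixing nor surplus; f maps it onto a single edge
  g(e), and the stacks are the classes generated by e ~ g(e).  Since f is expanding, the
  g-orbit of every edge e leaves the nonfinal edges; the first edge t(e) it reaches is the
  final edge of the stack of e, the stacks are the fibres of t, and the orbit
  e, g(e), ..., t(e) consists of distinct edges of that stack.  Hence if f(alpha_i) crosses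
  an edge e of K_j, then f^(m+1)(alpha_i) crosses alpha_j for some m < n_j: every edge of
  SG(f) is at most as long as the size of its target.  Irreducibility of T(f) connects any
  two edges by a walk along "f(a) crosses b"; its steps out of nonfinal edges stay inside a
  stack and the others are edges of SG(f).  A simple path from K_i in SG(f) visits every
  other stack at most once, so its length is at most n - n_i.
*)

definition edge_succ :: "('e \<Rightarrow> 'e oedge list) \<Rightarrow> 'e rel" where
  "edge_succ fe = {(x, y). traverses (fe x) y}"

lemma fst_set_omap: "fst ` set (omap fe x) = fst ` set (fe (fst x))"
  by (force simp: omap_def prev_def obar_def image_iff)

lemma fst_set_pmap: "fst ` set (pmap fe u) = edge_succ fe `` fst ` set u"
  by (auto simp: pmap_def edge_succ_def traverses_def fst_set_omap[symmetric] image_UN)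

lemma fst_set_pmap_pow: "fst ` set ((pmap fe ^^ n) u) = (edge_succ fe ^^ n) `` fst ` set u"
  by (induction n) (simp_all add: fst_set_pmap relcomp_Image)

lemma traverses_fpow_iff: "traverses (fpow fe n a) b \<longleftrightarrow> (a, b) \<in> edge_succ fe ^^ n"
  by (simp add: traverses_def fpow_def fst_set_pmap_pow)

lemma trans_mat_pos_eq_edge_succ: "{(a, b). 0 < trans_mat fe a b} = edge_succ fe"
  by (force simp: trans_mat_def edge_succ_def traverses_def filter_empty_conv)

lemma mat_pow_pos_imp_relpow:
  "0 < mat_pow E T k i j \<Longrightarrow> (i, j) \<in> {(a, b). 0 < T a b} ^^ k"
proof (induction k arbitrary: j)
  case 0
  then show ?case by (simp split: if_splits)
next
  case (Suc k)
  then obtain l where "0 < mat_pow E T k i l" "0 < T l j"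
    by (metis (no_types, lifting) gr_zeroI mat_pow.simps(2) mult_is_0 sum.neutral)
  with Suc.IH show ?case by (auto intro: relpow_Suc_I)
qed

lemma orbit_in_relpow:
  assumes "\<And>j. j < n \<Longrightarrow> ((f ^^ j) x, f ((f ^^ j) x)) \<in> R"
  shows "(x, (f ^^ n) x) \<in> R ^^ n"
  using assms by (induction n) (auto intro: relpow_Suc_I)

lemma inj_on_funpow_until_exit:
  fixes f :: "'a \<Rightarrow> 'a"
  assumes "\<not> P ((f ^^ n) x)" and "\<And>j. j < n \<Longrightarrow> P ((f ^^ j) x)"
  shows "inj_on (\<lambda>k. (f ^^ k) x) {0..n}"
proof -
  have False if "i < j" "j \<le> n" "(f ^^ i) x = (f ^^ j) x" for i j
  proof -
    have "n - (j - i) = (n - j) + i"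
      using that(1,2) by simp
    then have "(f ^^ (n - (j - i))) x = (f ^^ (n - j)) ((f ^^ i) x)"
      by (simp add: funpow_add)
    also have "\<dots> = (f ^^ (n - j)) ((f ^^ j) x)"
      using that(3) by simp
    also have "\<dots> = (f ^^ n) x"
      using that(2) by (metis comp_apply funpow_add le_add_diff_inverse2)
    finally have "\<not> P ((f ^^ (n - (j - i))) x)"
      using assms(1) by simp
    moreover have "n - (j - i) < n"
      using that(1,2) by simp
    ultimately show False
      using assms(2) by blast
  qed
  then show ?thesis
    by (intro inj_onI) (metis atLeastAtMost_iff linorder_neqE_nat)
qed

lemma rtrancl_Un_converse_iff_same_image:
  assumes "R \<subseteq> S \<times> S" and "\<And>x y. (x, y) \<in> R \<Longrightarrow> h x = h y"
    and "\<And>x. x \<in> S \<Longrightarrow> (x, h x) \<in> R\<^sup>*" and "x \<in> S"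
  shows "(x, y) \<in> (R \<union> R\<inverse>)\<^sup>* \<longleftrightarrow> y \<in> S \<and> h y = h x"
proof
  assume "(x, y) \<in> (R \<union> R\<inverse>)\<^sup>*"
  then show "y \<in> S \<and> h y = h x"
    by (induction rule: rtrancl_induct) (use assms in auto)
next
  assume y: "y \<in> S \<and> h y = h x"
  have "(x, h x) \<in> (R \<union> R\<inverse>)\<^sup>*"
    using assms(3)[OF assms(4)] by (rule rtrancl_mono[THEN subsetD, rotated]) blast
  moreover have "(h y, y) \<in> (R\<inverse>)\<^sup>*"
    using assms(3)[of y] y by (simp add: rtrancl_converse)
  then have "(h y, y) \<in> (R \<union> R\<inverse>)\<^sup>*"
    by (rule rtrancl_mono[THEN subsetD, rotated]) blast
  ultimately show "(x, y) \<in> (R \<union> R\<inverse>)\<^sup>*"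
    using y by (metis rtrancl_trans)
qed

lemma rtrancl_imp_distinct_path:
  "(a, b) \<in> R\<^sup>* \<Longrightarrow>
    \<exists>ps. distinct (a # ps) \<and> last (a # ps) = b \<and> successively (\<lambda>x y. (x, y) \<in> R) (a # ps)"
proof (induction rule: converse_rtrancl_induct)
  case base
  show ?case by (intro exI[of _ "[]"]) simp
next
  case (step a c)
  then obtain ps where ps: "distinct (c # ps)" "last (c # ps) = b"
      "successively (\<lambda>x y. (x, y) \<in> R) (c # ps)"
    by blast
  show ?case
  proof (cases "a \<in> set (c # ps)")
    case True
    then obtain xs ys where "c # ps = xs @ a # ys"
      by (metis split_list)
    with ps show ?thesis
      by (intro exI[of _ ys]) (auto simp: successively_append_iff)
  next
    case False
    with ps step.hyps(1) show ?thesis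
      by (intro exI[of _ "c # ps"]) simp
  qed
qed

lemma successively_imp_set_subset:
  "successively P (x # xs) \<Longrightarrow> (\<And>a b. P a b \<Longrightarrow> b \<in> S) \<Longrightarrow> set xs \<subseteq> S"
  by (induction xs arbitrary: x) auto

lemma sum_list_zip_le_sum_list:
  fixes c :: "'a \<Rightarrow> nat"
  assumes "successively P (x # xs)" and "\<And>a b. P a b \<Longrightarrow> h a b \<le> c b"
  shows "sum_list (map (\<lambda>(a, b). h a b) (zip (x # xs) xs)) \<le> sum_list (map c xs)"
  using assms(1)
proof (induction xs arbitrary: x)
  case (Cons y ys)
  then show ?case
    using assms(2) by (fastforce intro: add_mono)
qed simp

locale expanding_edge_map =
  fixes E :: "'e set" and fe :: "'e \<Rightarrow> 'e oedge list"
  assumes finite_E: "finite E"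
    and fe_nonempty: "e \<in> E \<Longrightarrow> fe e \<noteq> []"
    and fe_in_E: "e \<in> E \<Longrightarrow> fst ` set (fe e) \<subseteq> E"
    and expanding: "expanding E fe"
begin

definition nonfinal :: "'e set" where
  "nonfinal = {e \<in> E. \<not> mixing fe e \<and> \<not> surplus E fe e}"

definition next_edge :: "'e \<Rightarrow> 'e" where
  "next_edge e = fst (hd (fe e))"

lemma nonfinal_in_E: "e \<in> nonfinal \<Longrightarrow> e \<in> E"
  by (simp add: nonfinal_def)

lemma fe_nonfinal:
  assumes "e \<in> nonfinal"
  obtains b where "fe e = [(next_edge e, b)]"
proof -
  have "fe e \<noteq> []" "length (fe e) \<le> 1"
    using assms fe_nonempty by (auto simp: nonfinal_def mixing_def)
  then obtain x where "fe e = [x]"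
    by (cases "fe e") auto
  with that[of "snd x"] show ?thesis
    by (simp add: next_edge_def)
qed

lemma edge_succ_nonfinal_iff: "e \<in> nonfinal \<Longrightarrow> (e, y) \<in> edge_succ fe \<longleftrightarrow> y = next_edge e"
  by (elim fe_nonfinal) (auto simp: edge_succ_def traverses_def)

lemma edge_succ_closed: "(e, y) \<in> edge_succ fe \<Longrightarrow> e \<in> E \<Longrightarrow> y \<in> E"
  using fe_in_E by (auto simp: edge_succ_def traverses_def)

lemma next_edge_in_E: "e \<in> nonfinal \<Longrightarrow> next_edge e \<in> E"
  using edge_succ_nonfinal_iff edge_succ_closed nonfinal_in_E by blast

lemma pmap_nonfinal: "e \<in> nonfinal \<Longrightarrow> \<exists>b'. pmap fe [(e, b)] = [(next_edge e, b')]"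
  by (elim fe_nonfinal) (auto simp: pmap_def omap_def prev_def obar_def)

lemma pmap_pow_nonfinal_orbit:
  assumes "\<And>j. j < n \<Longrightarrow> (next_edge ^^ j) e \<in> nonfinal"
  shows "\<exists>b'. (pmap fe ^^ n) [(e, b)] = [((next_edge ^^ n) e, b')]"
  using assms
proof (induction n)
  case (Suc n)
  then obtain b' where "(pmap fe ^^ n) [(e, b)] = [((next_edge ^^ n) e, b')]"
    by auto
  with pmap_nonfinal[of "(next_edge ^^ n) e" b'] Suc.prems show ?case
    by auto
qed simp

lemma orbit_leaves_nonfinal:
  assumes "e \<in> E"
  shows "\<exists>m. (next_edge ^^ m) e \<notin> nonfinal"
proof (rule ccontr)
  assume "\<not> ?thesis"
  then have "length (fpow fe n e) = 1" for n
    using pmap_pow_nonfinal_orbit[of n e True] by (auto simp: fpow_def)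
  moreover have "\<forall>\<^sub>F n in sequentially. 2 \<le> length (fpow fe n e)"
    using expanding assms by (simp add: expanding_def filterlim_at_top)
  ultimately show False
    by simp
qed

definition steps_to_final :: "'e \<Rightarrow> nat" where
  "steps_to_final e = (LEAST m. (next_edge ^^ m) e \<notin> nonfinal)"

definition final_of :: "'e \<Rightarrow> 'e" where
  "final_of e = (next_edge ^^ steps_to_final e) e"

lemma final_of_notin_nonfinal: "e \<in> E \<Longrightarrow> final_of e \<notin> nonfinal"
  unfolding final_of_def steps_to_final_def by (rule LeastI_ex[OF orbit_leaves_nonfinal])

lemma orbit_nonfinal_before_steps: "j < steps_to_final e \<Longrightarrow> (next_edge ^^ j) e \<in> nonfinal"
  unfolding steps_to_final_def using not_less_Least by blast

lemma orbit_in_E: "e \<in> E \<Longrightarrow> j \<le> steps_to_final e \<Longrightarrow> (next_edge ^^ j) e \<in> E"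
  by (induction j) (auto simp: Suc_le_eq intro: next_edge_in_E orbit_nonfinal_before_steps)

lemma final_of_in_E: "e \<in> E \<Longrightarrow> final_of e \<in> E"
  by (simp add: final_of_def orbit_in_E)

lemma final_of_eq_self: "e \<notin> nonfinal \<Longrightarrow> final_of e = e"
  by (simp add: final_of_def steps_to_final_def Least_eq_0)

lemma steps_to_final_nonfinal:
  assumes "e \<in> nonfinal"
  shows "steps_to_final e = Suc (steps_to_final (next_edge e))"
proof -
  obtain m where "(next_edge ^^ m) e \<notin> nonfinal"
    using orbit_leaves_nonfinal nonfinal_in_E assms by blast
  then show ?thesis
    unfolding steps_to_final_def using assms by (subst Least_Suc) (auto simp: funpow_swap1)
qed

lemma final_of_next_edge: "e \<in> nonfinal \<Longrightarrow> final_of (next_edge e) = final_of e"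
  by (simp add: final_of_def steps_to_final_nonfinal funpow_swap1)

lemma final_of_orbit: "j \<le> steps_to_final e \<Longrightarrow> final_of ((next_edge ^^ j) e) = final_of e"
  by (induction j) (auto simp: final_of_next_edge orbit_nonfinal_before_steps)

lemma relpow_edge_succ_final_of:
  "(e, final_of e) \<in> edge_succ fe ^^ steps_to_final e"
  unfolding final_of_def
  by (rule orbit_in_relpow) (simp add: edge_succ_nonfinal_iff orbit_nonfinal_before_steps)

lemma stack_step_eq: "stack_step E fe = {(e, next_edge e) | e. e \<in> nonfinal}"
  unfolding stack_step_def nonfinal_def next_edge_def by blast

lemma stack_step_rtrancl_final_of: "(e, final_of e) \<in> (stack_step E fe)\<^sup>*"
proof -
  have "(e, final_of e) \<in> stack_step E fe ^^ steps_to_final e"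
    unfolding final_of_def
    by (rule orbit_in_relpow) (auto simp: stack_step_eq orbit_nonfinal_before_steps)
  then show ?thesis
    by (rule relpow_imp_rtrancl)
qed

definition stack_of :: "'e \<Rightarrow> 'e set" where
  "stack_of e = {e' \<in> E. final_of e' = final_of e}"

lemma stack_of_eq: "e' \<in> stack_of e \<Longrightarrow> stack_of e' = stack_of e"
  by (simp add: stack_of_def)

lemma stack_rel_iff:
  "e \<in> E \<Longrightarrow> (e, e') \<in> stack_rel E fe \<longleftrightarrow> e' \<in> E \<and> final_of e' = final_of e"
  unfolding stack_rel_def
  by (rule rtrancl_Un_converse_iff_same_image)
    (auto simp: stack_step_eq nonfinal_in_E next_edge_in_E final_of_next_edge
      stack_step_rtrancl_final_of[unfolded stack_step_eq])

lemma stacks_eq: "stacks E fe = stack_of ` E"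
  unfolding stacks_def quotient_def stack_of_def using stack_rel_iff by auto

lemma final_edge_stack_of: "e \<in> E \<Longrightarrow> final_edge E fe (stack_of e) = final_of e"
  unfolding final_edge_def
proof (rule the_equality)
  assume "e \<in> E"
  then show "final_of e \<in> stack_of e \<and> (mixing fe (final_of e) \<or> surplus E fe (final_of e))"
    using final_of_in_E final_of_notin_nonfinal final_of_eq_self
    by (auto simp: stack_of_def nonfinal_def)
next
  fix a
  assume "a \<in> stack_of e \<and> (mixing fe a \<or> surplus E fe a)"
  then show "a = final_of e"
    using final_of_eq_self by (auto simp: stack_of_def nonfinal_def)
qed

lemma card_stack_of_ge:
  assumes "e \<in> E"
  shows "Suc (steps_to_final e) \<le> card (stack_of e)"
proof -
  have "inj_on (\<lambda>j. (next_edge ^^ j) e) {0..steps_to_final e}"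
    using final_of_notin_nonfinal[OF assms] orbit_nonfinal_before_steps[of _ e]
    by (intro inj_on_funpow_until_exit[where P = "\<lambda>x. x \<in> nonfinal"]) (auto simp: final_of_def)
  moreover have "(\<lambda>j. (next_edge ^^ j) e) ` {0..steps_to_final e} \<subseteq> stack_of e"
    using assms by (auto simp: stack_of_def orbit_in_E final_of_orbit)
  moreover have "finite (stack_of e)"
    using finite_E by (simp add: stack_of_def)
  ultimately show ?thesis
    by (metis card_atLeastAtMost card_image card_mono minus_nat.diff_0)
qed

lemma sg_len_le_card:
  assumes "sg_edge E fe K K'"
  shows "sg_len E fe K K' \<le> card K'"
proof -
  obtain e where e: "e \<in> E" "K = stack_of e"
    using assms by (auto simp: sg_edge_def stacks_eq)
  obtain y where y: "(final_of e, y) \<in> edge_succ fe" "y \<in> K'"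
    using assms e by (auto simp: sg_edge_def final_edge_stack_of edge_succ_def traverses_def)
  have K': "K' = stack_of y" and "y \<in> E"
    using assms y(2) stack_of_eq by (auto simp: sg_edge_def stacks_eq stack_of_def)
  have "(final_of e, final_of y) \<in> edge_succ fe ^^ Suc (steps_to_final y)"
    using y(1) relpow_edge_succ_final_of by (rule relpow_Suc_I2)
  then have "traverses (fpow fe (Suc (steps_to_final y)) (final_edge E fe K)) (final_edge E fe K')"
    by (simp add: traverses_fpow_iff e K' final_edge_stack_of \<open>y \<in> E\<close>)
  then have "sg_len E fe K K' \<le> Suc (steps_to_final y)"
    unfolding sg_len_def by (intro Least_le) simp
  also have "\<dots> \<le> card K'"
    using card_stack_of_ge[OF \<open>y \<in> E\<close>] K' by simp
  finally show ?thesis .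
qed

lemma edge_succ_imp_same_stack_or_sg_edge:
  assumes "(e, e') \<in> edge_succ fe" and "e \<in> E"
  shows "stack_of e' = stack_of e \<or> sg_edge E fe (stack_of e) (stack_of e')"
proof (cases "e \<in> nonfinal")
  case True
  then show ?thesis
    using assms final_of_next_edge edge_succ_nonfinal_iff by (simp add: stack_of_def)
next
  case False
  have "e' \<in> E"
    using assms by (rule edge_succ_closed)
  moreover have "final_edge E fe (stack_of e) = e"
    using assms(2) False by (simp add: final_edge_stack_of final_of_eq_self)
  ultimately show ?thesis
    using assms by (auto simp: sg_edge_def stacks_eq stack_of_def edge_succ_def traverses_def)
qed

lemma edge_succ_rtrancl_imp_sg_rtrancl:
  assumes "(e, e') \<in> (edge_succ fe)\<^sup>*" and "e \<in> E"
  shows "(stack_of e, stack_of e') \<in> {(K, K'). sg_edge E fe K K'}\<^sup>*"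
  using assms(1)
proof (induction rule: rtrancl_induct)
  case (step y z)
  have "y \<in> E"
    using step.hyps(1) assms(2) by (induction rule: rtrancl_induct) (auto dest: edge_succ_closed)
  then show ?case
    using edge_succ_imp_same_stack_or_sg_edge[OF step.hyps(2)] step.IH
    by (auto intro: rtrancl_into_rtrancl)
qed simp

lemma finite_stacks: "finite (stacks E fe)"
  using finite_E by (simp add: stacks_eq)

lemma sum_card_stacks: "sum card (stacks E fe) = card E"
proof -
  have "card (\<Union>(stacks E fe)) = sum card (stacks E fe)"
    using finite_E
    by (intro card_Union_disjoint) (auto simp: stacks_eq stack_of_def pairwise_def disjnt_def)
  moreover have "\<Union>(stacks E fe) = E"
    by (auto simp: stacks_eq stack_of_def)
  ultimately show ?thesis
    by simp
qed

end

locale irreducible_expanding_edge_map = expanding_edge_map +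
  assumes irreducible: "irreducible_mat E (trans_mat fe)"
begin

lemma sg_rtrancl_stacks:
  assumes "K \<in> stacks E fe" and "K' \<in> stacks E fe"
  shows "(K, K') \<in> {(K, K'). sg_edge E fe K K'}\<^sup>*"
proof -
  obtain e e' where e: "e \<in> E" "K = stack_of e" and e': "e' \<in> E" "K' = stack_of e'"
    using assms by (auto simp: stacks_eq)
  then obtain k where "0 < mat_pow E (trans_mat fe) k e e'"
    using irreducible by (auto simp: irreducible_mat_def)
  then have "(e, e') \<in> edge_succ fe ^^ k"
    unfolding trans_mat_pos_eq_edge_succ[symmetric] by (rule mat_pow_pos_imp_relpow)
  then show ?thesis
    using e e' by (auto intro: edge_succ_rtrancl_imp_sg_rtrancl relpow_imp_rtrancl)
qed

lemma stacks_subset_dball: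
  assumes K: "K \<in> stacks E fe"
  shows "stacks E fe \<subseteq> dball E fe (card E - card K) K"
proof
  fix K'
  assume "K' \<in> stacks E fe"
  then obtain ps where ps: "distinct (K # ps)" "last (K # ps) = K'"
    and walk: "successively (sg_edge E fe) (K # ps)"
    using rtrancl_imp_distinct_path[OF sg_rtrancl_stacks[OF K]] by auto
  have ps_stacks: "set ps \<subseteq> stacks E fe"
    using walk by (rule successively_imp_set_subset) (simp add: sg_edge_def)
  have "sg_path E fe (K # ps)"
    using K ps_stacks walk by (simp add: sg_path_def successively_conv_nth)
  moreover have "sg_path_len E fe (K # ps) \<le> card E - card K"
  proof -
    have "sg_path_len E fe (K # ps) \<le> sum_list (map card ps)"
      unfolding sg_path_len_def using walk
      by (auto intro: sum_list_zip_le_sum_list sg_len_le_card)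
    also have "\<dots> = sum card (set ps)"
      using ps(1) by (simp add: sum_list_distinct_conv_sum_set)
    also have "\<dots> \<le> sum card (stacks E fe - {K})"
      using ps(1) ps_stacks finite_stacks by (intro sum_mono2) auto
    also have "\<dots> = card E - card K"
      using K finite_stacks by (simp add: sum_diff1_nat sum_card_stacks)
    finally show ?thesis .
  qed
  ultimately show "K' \<in> dball E fe (card E - card K) K"
    using ps(2) unfolding dball_def by (intro CollectI exI[of _ "K # ps"]) simp
qed

lemma stack_graph_strongly_connected: "sg_strongly_connected E fe"
  using stacks_subset_dball unfolding sg_strongly_connected_def dball_def by blast

end

theorem lemma4p6:
  fixes V :: "'v set" and E :: "'e set" and src tgt :: "'e \<Rightarrow> 'v"
    and fv :: "'v \<Rightarrow> 'v" and fe :: "'e \<Rightarrow> 'e oedge list"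
  assumes "is_graph V E src tgt"
    and "graph_map V E src tgt fv fe"
    and "irreducible_map V E src tgt fe"
    and "expanding E fe"
  shows "sg_strongly_connected E fe \<and>
         (\<forall>K\<in>stacks E fe. stacks E fe \<subseteq> dball E fe (card E - card K) K)"
proof -
  interpret irreducible_expanding_edge_map E fe
    using assms
    by unfold_locales (auto simp: is_graph_def graph_map_def is_edge_path_def irreducible_map_def)
  show ?thesis
    using stack_graph_strongly_connected stacks_subset_dball by blast
qed

end
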